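(* Consider a substrate edge $(u,v)\in E_S$. Let $0<\varepsilon\le1$ be such that $d_{\max}(r,u,v)/d_S(u,v)\le\varepsilon$ for all $r\in\mathcal R$. Let $\Delta=\sum_{r\in\mathcal R}\big(A_{\max}(r,u,v)/d_{\max}(r,u,v)\big)^2$ and $\gamma=1+\varepsilon\sqrt{2\Delta\log|V_S|}$. Then $\mathbb P\big(A_{u,v}\ge\gamma\cdot d_S(u,v)\big)\le|V_S|^{-4}$.
   Context: Substrate: directed graph $G_S=(V_S,E_S)$, node types $\mathcal T$, $V_S^\tau\subseteq V_S$, resources $R_S=\{(\tau,u):u\in V_S^\tau\}\cup E_S$, capacities $d_S(x,y)>0$. Requests $r\in\mathcal R$: directed graph $G_r=(V_r,E_r)$, types $\tau_r$, demands $d_r(i),d_r(i,j)\ge0$, allowed node sets $V_S^{r,i}\subseteq V_S^{\tau_r(i)}$, allowed edge sets $E_S^{r,i,j}\subseteq E_S$. Valid mappings $m_r$ (nodes to allowed nodes, each edge $(i,j)$ to a directed path between the images within $E_S^{r,i,j}$), set $\mathcal M_r$; allocation $A(m_r,u,v)=\sum_{(i,j):(u,v)\in m^E_r(i,j)}d_r(i,j)$ for edges and $A(m_r,\tau,u)=\sum_{i:\tau_r(i)=\tau,m_r^V(i)=u}d_r(i)$ for node resources; $d_{\max}(r,u,v)=\max_{(i,j)\in E_r:(u,v)\in E_S^{r,i,j}}d_r(i,j)$; $A_{\max}(r,u,v)=\max_{m\in\mathcal M_r}A(m,u,v)$. Rounding setting (profit variant): for each request $r$ a finite family $\mathcal D_r=\{(f^k_r,m^k_r)\}_k$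 with $f^k_r>0$, $m^k_r\in\mathcal M_r$, $\sum_kf^k_r\le1$, obtained by decomposing a feasible solution of the paper's decomposable LP relaxation of the VNEP, so that in particular $\sum_r\sum_kf^k_rA(m^k_r,x,y)\le d_S(x,y)$ for all resources $(x,y)$. Independently for each $r$, $m^k_r$ is selected with probability $f^k_r$ and nothing with probability $1-\sum_kf^k_r$; $A_{u,v}$ is the total allocation of the selected mappings on $(u,v)$. *)

theory Defs
  imports "HOL-Probability.Probability"
begin

definition is_dpath :: "('v \<times> 'v) set \<Rightarrow> 'v \<Rightarrow> 'v \<Rightarrow> 'v list \<Rightarrow> bool" where
  "is_dpath E s t p \<longleftrightarrow> p \<noteq> [] \<and> hd p = s \<and> last p = t \<and> distinct p \<and> set (zip p (tl p)) \<subseteq> E"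

definition path_edges :: "'v list \<Rightarrow> ('v \<times> 'v) set" where
  "path_edges p = set (zip p (tl p))"

text \<open>A mapping: node map and edge map (each request edge to a substrate path).\<close>
type_synonym ('n, 'v) mapping = "('n \<Rightarrow> 'v) \<times> ('n \<times> 'n \<Rightarrow> 'v list)"

definition valid_mapping ::
  "('v \<times> 'v) set \<Rightarrow> 'n set \<Rightarrow> ('n \<times> 'n) set \<Rightarrow> ('n \<Rightarrow> 'v set)
   \<Rightarrow> ('n \<Rightarrow> 'n \<Rightarrow> ('v \<times> 'v) set) \<Rightarrow> ('n, 'v) mapping \<Rightarrow> bool" where
  "valid_mapping ES Vr Er Vallow Eallow m \<longleftrightarrow>
     (\<forall>i\<in>Vr. fst m i \<in> Vallow i) \<and>
     (\<forall>(i,j)\<in>Er. is_dpath (ES \<inter> Eallow i j) (fst m i) (fst m j) (snd m (i,j)))"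

definition alloc_edge :: "('n \<times> 'n) set \<Rightarrow> ('n \<times> 'n \<Rightarrow> real) \<Rightarrow> ('n, 'v) mapping \<Rightarrow> 'v \<Rightarrow> 'v \<Rightarrow> real" where
  "alloc_edge Er dE m u v = (\<Sum>e\<in>{e\<in>Er. (u,v) \<in> path_edges (snd m e)}. dE e)"

definition alloc_node :: "'n set \<Rightarrow> ('n \<Rightarrow> 't) \<Rightarrow> ('n \<Rightarrow> real) \<Rightarrow> ('n, 'v) mapping \<Rightarrow> 't \<Rightarrow> 'v \<Rightarrow> real" where
  "alloc_node Vr tau dV m ty u = (\<Sum>i\<in>{i\<in>Vr. tau i = ty \<and> fst m i = u}. dV i)"

text \<open>d_max(r,u,v); the maximum over the empty set is taken to be 0 (demands are nonnegative).\<close>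
definition d_max :: "('n \<times> 'n) set \<Rightarrow> ('n \<times> 'n \<Rightarrow> real) \<Rightarrow> ('n \<Rightarrow> 'n \<Rightarrow> ('v \<times> 'v) set) \<Rightarrow> 'v \<Rightarrow> 'v \<Rightarrow> real" where
  "d_max Er dE Eallow u v = Max (insert 0 {dE (i,j) | i j. (i,j) \<in> Er \<and> (u,v) \<in> Eallow i j})"

text \<open>A_max(r,u,v) = max over valid mappings; 0 if there is no valid mapping (allocations are nonnegative).\<close>
definition A_max ::
  "('v \<times> 'v) set \<Rightarrow> 'n set \<Rightarrow> ('n \<times> 'n) set \<Rightarrow> ('n \<Rightarrow> 'v set)
   \<Rightarrow> ('n \<Rightarrow> 'n \<Rightarrow> ('v \<times> 'v) set) \<Rightarrow> ('n \<times> 'n \<Rightarrow> real) \<Rightarrow> 'v \<Rightarrow> 'v \<Rightarrow> real" where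
  "A_max ES Vr Er Vallow Eallow dE u v =
     Max (insert 0 {alloc_edge Er dE m u v | m. valid_mapping ES Vr Er Vallow Eallow m})"

definition select_pmf :: "'k set \<Rightarrow> ('k \<Rightarrow> real) \<Rightarrow> 'k option pmf" where
  "select_pmf K f = embed_pmf (\<lambda>x. case x of
       None \<Rightarrow> 1 - (\<Sum>k\<in>K. f k)
     | Some k \<Rightarrow> (if k \<in> K then f k else 0))"

definition joint_selection :: "'r set \<Rightarrow> ('r \<Rightarrow> 'k set) \<Rightarrow> ('r \<Rightarrow> 'k \<Rightarrow> real) \<Rightarrow> ('r \<Rightarrow> 'k option) pmf" where
  "joint_selection R K f = Pi_pmf R None (\<lambda>r. select_pmf (K r) (f r))"

end

theory Submission
  imports Defs
begin

text \<open>
  Under the rounding, request r independently puts a load on (u, v) lying between 0 and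
  A_max(r,u,v), and by feasibility of the LP solution the expected total load is at most
  d_S(u,v). Since d_max(r,u,v) \<le> \<epsilon> d_S(u,v), the Hoeffding denominator
  \<Sum>_r A_max(r,u,v)^2 is at most \<epsilon>^2 d_S(u,v)^2 \<Delta>, and Hoeffding's inequality
  for the deviation (\<gamma> - 1) d_S(u,v) = \<epsilon> d_S(u,v) sqrt(2 \<Delta> ln |V_S|) gives
  exp(-4 ln |V_S|) = |V_S|^-4.
\<close>

lemma self_le_mult_divide:
  fixes b c d :: real
  assumes "0 \<le> c" and "0 \<le> d" and "d \<le> b" and "d = 0 \<Longrightarrow> c = 0"
  shows "c \<le> b * (c / d)"
proof (cases "d = 0")
  case False
  then have "c = d * (c / d)"
    by simp
  also have "\<dots> \<le> b * (c / d)"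
    using assms by (intro mult_right_mono) auto
  finally show ?thesis .
qed (use assms in simp)

lemma exp_le_powr_neg4:
  fixes n s t :: real
  assumes "1 \<le> n" and "0 < s" and "2 * s * ln n \<le> t\<^sup>2"
  shows "exp (-2 * t\<^sup>2 / s) \<le> n powr (-4)"
proof -
  have "4 * ln n \<le> 2 * t\<^sup>2 / s"
    using assms(2,3) by (simp add: pos_le_divide_eq)
  then have "exp (-2 * t\<^sup>2 / s) \<le> exp (-4 * ln n)"
    by simp
  also have "\<dots> = n powr (-4)"
    using assms(1) by (simp add: powr_def)
  finally show ?thesis .
qed

lemma d_max_nonneg:
  assumes "finite Er"
  shows "0 \<le> d_max Er dE Eallow u v"
  unfolding d_max_def
  by (rule Max_ge) (auto intro: finite_subset[OF _ finite_imageI[OF assms, of dE]])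

lemma dE_le_d_max:
  assumes "finite Er" and "(i, j) \<in> Er" and "(u, v) \<in> Eallow i j"
  shows "dE (i, j) \<le> d_max Er dE Eallow u v"
  unfolding d_max_def using assms
  by (intro Max_ge) (auto intro: finite_subset[OF _ finite_imageI[OF assms(1), of dE]])

lemma valid_mapping_path_edge_allowed:
  assumes "valid_mapping ES Vr Er Vallow Eallow m" and "(i, j) \<in> Er"
    and "(u, v) \<in> path_edges (snd m (i, j))"
  shows "(u, v) \<in> Eallow i j"
  using assms unfolding valid_mapping_def is_dpath_def path_edges_def by auto

lemma alloc_edge_nonneg:
  assumes "\<And>e. 0 \<le> dE e"
  shows "0 \<le> alloc_edge Er dE m u v"
  unfolding alloc_edge_def using assms by (intro sum_nonneg) auto

lemma alloc_edge_le_card_mult_d_max: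
  assumes fin: "finite Er" and m: "valid_mapping ES Vr Er Vallow Eallow m"
  shows "alloc_edge Er dE m u v \<le> real (card Er) * d_max Er dE Eallow u v"
proof -
  let ?used = "{e \<in> Er. (u, v) \<in> path_edges (snd m e)}"
  have "alloc_edge Er dE m u v \<le> (\<Sum>e\<in>?used. d_max Er dE Eallow u v)"
    unfolding alloc_edge_def
    by (intro sum_mono) (auto intro!: dE_le_d_max[OF fin] valid_mapping_path_edge_allowed[OF m])
  also have "\<dots> \<le> real (card Er) * d_max Er dE Eallow u v"
  proof -
    have "card ?used \<le> card Er"
      by (rule card_mono[OF fin]) auto
    then show ?thesis
      unfolding sum_constant by (intro mult_right_mono d_max_nonneg[OF fin]) simp
  qed
  finally show ?thesis .
qed

lemma finite_alloc_edge_values: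
  assumes "finite Er"
  shows "finite {alloc_edge Er dE m u v | m. P m}"
  by (rule finite_subset[of _ "sum dE ` Pow Er"]) (auto simp: alloc_edge_def assms)

lemma A_max_nonneg:
  assumes "finite Er"
  shows "0 \<le> A_max ES Vr Er Vallow Eallow dE u v"
  unfolding A_max_def using finite_alloc_edge_values[OF assms] by (intro Max_ge) auto

lemma alloc_edge_le_A_max:
  assumes "finite Er" and "valid_mapping ES Vr Er Vallow Eallow m"
  shows "alloc_edge Er dE m u v \<le> A_max ES Vr Er Vallow Eallow dE u v"
  unfolding A_max_def
proof (rule Max_ge)
  show "finite (insert 0 {alloc_edge Er dE m u v |m. valid_mapping ES Vr Er Vallow Eallow m})"
    using finite_alloc_edge_values[OF assms(1)] by simp
qed (use assms(2) in blast)

lemma A_max_le_card_mult_d_max: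
  assumes "finite Er"
  shows "A_max ES Vr Er Vallow Eallow dE u v \<le> real (card Er) * d_max Er dE Eallow u v"
  unfolding A_max_def
proof (rule Max.boundedI)
  fix x
  assume "x \<in> insert 0 {alloc_edge Er dE m u v |m. valid_mapping ES Vr Er Vallow Eallow m}"
  then consider "x = 0"
    | m where "x = alloc_edge Er dE m u v" and "valid_mapping ES Vr Er Vallow Eallow m"
    by blast
  then show "x \<le> real (card Er) * d_max Er dE Eallow u v"
  proof cases
    case 1
    then show ?thesis
      by (simp add: d_max_nonneg assms)
  next
    case 2
    then show ?thesis
      by (simp add: alloc_edge_le_card_mult_d_max assms)
  qed
qed (use finite_alloc_edge_values[OF assms] in simp_all)

lemma A_max_eq_0_if_d_max_eq_0:
  assumes "finite Er" and "d_max Er dE Eallow u v = 0"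
  shows "A_max ES Vr Er Vallow Eallow dE u v = 0"
  using A_max_le_card_mult_d_max[OF assms(1)] A_max_nonneg[OF assms(1)] assms(2)
  by (metis antisym mult_zero_right)

definition selection_value :: "('r \<Rightarrow> 'k \<Rightarrow> real) \<Rightarrow> 'r \<Rightarrow> ('r \<Rightarrow> 'k option) \<Rightarrow> real" where
  "selection_value a r \<omega> = (case \<omega> r of None \<Rightarrow> 0 | Some k \<Rightarrow> a r k)"

lemma pmf_select_pmf:
  assumes K: "finite K" and f_nonneg: "\<And>k. k \<in> K \<Longrightarrow> f k \<ge> 0" and f_sum: "(\<Sum>k\<in>K. f k) \<le> 1"
  shows "pmf (select_pmf K f) x =
    (case x of None \<Rightarrow> 1 - (\<Sum>k\<in>K. f k) | Some k \<Rightarrow> (if k \<in> K then f k else 0))"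
  unfolding select_pmf_def
proof (rule pmf_embed_pmf)
  let ?p = "\<lambda>x. case x of None \<Rightarrow> 1 - (\<Sum>k\<in>K. f k) | Some k \<Rightarrow> (if k \<in> K then f k else 0)"
  show "\<And>x. 0 \<le> ?p x"
    using f_nonneg f_sum by (auto split: option.split)
  have "(\<integral>\<^sup>+x. ennreal (?p x) \<partial>count_space UNIV) = (\<Sum>x\<in>insert None (Some ` K). ennreal (?p x))"
    by (rule nn_integral_count_space') (auto simp: K split: option.split)
  also have "\<dots> = ennreal (1 - (\<Sum>k\<in>K. f k)) + (\<Sum>k\<in>K. ennreal (f k))"
    by (simp add: K sum.reindex)
  also have "\<dots> = 1"
    using f_nonneg f_sum by (simp add: sum_nonneg flip: ennreal_plus)
  finally show "(\<integral>\<^sup>+x. ennreal (?p x) \<partial>count_space UNIV) = 1" .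
qed

lemma set_pmf_select_pmf:
  assumes "finite K" and "\<And>k. k \<in> K \<Longrightarrow> f k \<ge> 0" and "(\<Sum>k\<in>K. f k) \<le> 1"
  shows "set_pmf (select_pmf K f) \<subseteq> insert None (Some ` K)"
proof
  fix x
  assume "x \<in> set_pmf (select_pmf K f)"
  then have "pmf (select_pmf K f) x \<noteq> 0"
    by (simp add: set_pmf_iff)
  then show "x \<in> insert None (Some ` K)"
    using pmf_select_pmf[OF assms, of x] by (auto split: option.splits if_splits)
qed

lemma expectation_select_pmf:
  assumes K: "finite K" and "\<And>k. k \<in> K \<Longrightarrow> f k \<ge> 0" and "(\<Sum>k\<in>K. f k) \<le> 1"
  shows "measure_pmf.expectation (select_pmf K f) (\<lambda>x. case x of None \<Rightarrow> 0 | Some k \<Rightarrow> a k)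
    = (\<Sum>k\<in>K. f k * a k)"
proof -
  have "measure_pmf.expectation (select_pmf K f) (\<lambda>x. case x of None \<Rightarrow> 0 | Some k \<Rightarrow> a k)
      = (\<Sum>x\<in>Some ` K. (case x of None \<Rightarrow> 0 | Some k \<Rightarrow> a k) * pmf (select_pmf K f) x)"
    using set_pmf_select_pmf[OF assms] by (intro integral_measure_pmf_real) (auto simp: K)
  also have "\<dots> = (\<Sum>k\<in>K. f k * a k)"
    by (simp add: sum.reindex pmf_select_pmf[OF assms] mult.commute)
  finally show ?thesis .
qed

locale fractional_selection =
  fixes R :: "'r set" and K :: "'r \<Rightarrow> 'k set" and f :: "'r \<Rightarrow> 'k \<Rightarrow> real"
  assumes finite_R: "finite R"
    and finite_K: "r \<in> R \<Longrightarrow> finite (K r)"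
    and f_nonneg: "r \<in> R \<Longrightarrow> k \<in> K r \<Longrightarrow> 0 \<le> f r k"
    and f_sum_le_1: "r \<in> R \<Longrightarrow> (\<Sum>k\<in>K r. f r k) \<le> 1"
begin

lemma component_joint_selection:
  assumes "r \<in> R"
  shows "map_pmf (\<lambda>\<omega>. \<omega> r) (joint_selection R K f) = select_pmf (K r) (f r)"
  using assms finite_R unfolding joint_selection_def by (simp add: Pi_pmf_component)

lemma set_pmf_joint_selection:
  assumes r: "r \<in> R" and \<omega>: "\<omega> \<in> set_pmf (joint_selection R K f)"
  shows "\<omega> r \<in> insert None (Some ` K r)"
proof -
  have "\<omega> r \<in> set_pmf (map_pmf (\<lambda>\<omega>. \<omega> r) (joint_selection R K f))"
    using \<omega> by simp
  moreover have "set_pmf (select_pmf (K r) (f r)) \<subseteq> insert None (Some ` K r)"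
    using r by (intro set_pmf_select_pmf finite_K f_nonneg f_sum_le_1)
  ultimately show ?thesis
    unfolding component_joint_selection[OF r] by blast
qed

lemma indep_vars_selection_value:
  "prob_space.indep_vars (measure_pmf (joint_selection R K f)) (\<lambda>_. borel) (selection_value a) R"
proof -
  have "prob_space.indep_vars (measure_pmf (joint_selection R K f)) (\<lambda>_. borel)
      (\<lambda>r \<omega>. (\<lambda>x. case x of None \<Rightarrow> 0 | Some k \<Rightarrow> a r k) (\<omega> r)) R"
    unfolding joint_selection_def
    by (intro prob_space.indep_vars_compose2[OF _ indep_vars_Pi_pmf])
       (auto simp: measure_pmf.prob_space_axioms finite_R)
  then show ?thesis
    unfolding selection_value_def by simp
qed

lemma expectation_selection_value:
  assumes r: "r \<in> R"
  shows "measure_pmf.expectation (joint_selection R K f) (selection_value a r) = (\<Sum>k\<in>K r. f r k * a r k)"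
proof -
  have "measure_pmf.expectation (joint_selection R K f) (selection_value a r)
      = measure_pmf.expectation (map_pmf (\<lambda>\<omega>. \<omega> r) (joint_selection R K f))
          (\<lambda>x. case x of None \<Rightarrow> 0 | Some k \<Rightarrow> a r k)"
    unfolding selection_value_def by simp
  also have "\<dots> = (\<Sum>k\<in>K r. f r k * a r k)"
    unfolding component_joint_selection[OF r]
    using r by (intro expectation_select_pmf finite_K f_nonneg f_sum_le_1)
  finally show ?thesis .
qed

lemma selection_value_bounds:
  assumes "r \<in> R" and "\<omega> \<in> set_pmf (joint_selection R K f)"
    and "\<And>r k. r \<in> R \<Longrightarrow> k \<in> K r \<Longrightarrow> a r k \<in> {0..c r}" and "\<And>r. r \<in> R \<Longrightarrow> 0 \<le> c r"
  shows "selection_value a r \<omega> \<in> {0..c r}"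
  using set_pmf_joint_selection[OF assms(1,2)] assms(1,3,4)
  unfolding selection_value_def by auto

lemma prob_selection_sum_ge:
  assumes a_bounds: "\<And>r k. r \<in> R \<Longrightarrow> k \<in> K r \<Longrightarrow> a r k \<in> {0..c r}"
    and c_nonneg: "\<And>r. r \<in> R \<Longrightarrow> 0 \<le> c r"
    and mean: "(\<Sum>r\<in>R. \<Sum>k\<in>K r. f r k * a r k) \<le> \<mu>"
    and t: "0 \<le> t" and spread: "(\<Sum>r\<in>R. (c r)\<^sup>2) > 0"
  shows "measure_pmf.prob (joint_selection R K f) {\<omega>. \<mu> + t \<le> (\<Sum>r\<in>R. selection_value a r \<omega>)}
    \<le> exp (-2 * t\<^sup>2 / (\<Sum>r\<in>R. (c r)\<^sup>2))"
proof -
  define J where "J = joint_selection R K f"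
  define \<mu>' where "\<mu>' = (\<Sum>r\<in>R. measure_pmf.expectation J (selection_value a r))"
  interpret Hoeffding_ineq "measure_pmf J" R "selection_value a" "\<lambda>_. 0" c \<mu>'
  proof unfold_locales
    show "prob_space.indep_vars (measure_pmf J) (\<lambda>_. borel) (selection_value a) R"
      unfolding J_def by (rule indep_vars_selection_value)
    show "AE \<omega> in measure_pmf J. selection_value a r \<omega> \<in> {0..c r}" if "r \<in> R" for r
      using that unfolding J_def AE_measure_pmf_iff
      by (blast intro: selection_value_bounds a_bounds c_nonneg)
  qed (simp_all add: \<mu>'_def finite_R)
  have "\<mu>' \<le> \<mu>"
    using mean unfolding \<mu>'_def J_def by (simp add: expectation_selection_value)
  then have "measure_pmf.prob J {\<omega>. \<mu> + t \<le> (\<Sum>r\<in>R. selection_value a r \<omega>)}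
      \<le> measure_pmf.prob J {\<omega> \<in> space (measure_pmf J). \<mu>' + t \<le> (\<Sum>r\<in>R. selection_value a r \<omega>)}"
    by (intro measure_pmf.finite_measure_mono) auto
  also have "\<dots> \<le> exp (-2 * t\<^sup>2 / (\<Sum>r\<in>R. (c r)\<^sup>2))"
    using Hoeffding_ineq_ge[OF t] spread by simp
  finally show ?thesis
    unfolding J_def .
qed

text \<open>
  Since x / 0 = 0, a request with d r = 0 contributes nothing to the sum under the square root;
  the hypothesis \<open>d_zero\<close> ensures that such a request also carries no load.
\<close>

lemma prob_selection_overload:
  fixes D \<epsilon> n :: real
  assumes a_bounds: "\<And>r k. r \<in> R \<Longrightarrow> k \<in> K r \<Longrightarrow> a r k \<in> {0..c r}"
    and c_nonneg: "\<And>r. r \<in> R \<Longrightarrow> 0 \<le> c r"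
    and mean: "(\<Sum>r\<in>R. \<Sum>k\<in>K r. f r k * a r k) \<le> D" and D: "0 < D"
    and d_nonneg: "\<And>r. r \<in> R \<Longrightarrow> 0 \<le> d r" and d_le: "\<And>r. r \<in> R \<Longrightarrow> d r \<le> \<epsilon> * D"
    and d_zero: "\<And>r. r \<in> R \<Longrightarrow> d r = 0 \<Longrightarrow> c r = 0"
    and \<epsilon>: "0 \<le> \<epsilon>" and n: "1 \<le> n"
  shows "measure_pmf.prob (joint_selection R K f)
      {\<omega>. (1 + \<epsilon> * sqrt (2 * (\<Sum>r\<in>R. (c r / d r)\<^sup>2) * ln n)) * D \<le> (\<Sum>r\<in>R. selection_value a r \<omega>)}
    \<le> n powr (-4)"
proof -
  define \<Delta> where "\<Delta> = (\<Sum>r\<in>R. (c r / d r)\<^sup>2)"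
  define S where "S = (\<Sum>r\<in>R. (c r)\<^sup>2)"
  define t where "t = \<epsilon> * sqrt (2 * \<Delta> * ln n) * D"
  have \<Delta>: "0 \<le> \<Delta>" and ln_n: "0 \<le> ln n"
    using n by (auto simp: \<Delta>_def intro: sum_nonneg)
  have t: "0 \<le> t" and t_sq: "t\<^sup>2 = 2 * (\<epsilon>\<^sup>2 * D\<^sup>2 * \<Delta>) * ln n"
    using \<epsilon> D \<Delta> ln_n by (simp_all add: t_def power_mult_distrib)
  have "S \<le> (\<Sum>r\<in>R. (\<epsilon> * D * (c r / d r))\<^sup>2)"
    unfolding S_def using c_nonneg d_nonneg d_le d_zero
    by (intro sum_mono power_mono self_le_mult_divide) auto
  also have "\<dots> = \<epsilon>\<^sup>2 * D\<^sup>2 * \<Delta>"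
    unfolding \<Delta>_def sum_distrib_left by (simp only: power_mult_distrib)
  finally have S_le: "S \<le> \<epsilon>\<^sup>2 * D\<^sup>2 * \<Delta>" .
  let ?event = "{\<omega>. D + t \<le> (\<Sum>r\<in>R. selection_value a r \<omega>)}"
  have "measure_pmf.prob (joint_selection R K f) ?event \<le> n powr (-4)"
  proof (cases "S = 0")
    case True
    then have "c r = 0" if "r \<in> R" for r
      using that finite_R by (simp add: S_def sum_nonneg_eq_0_iff)
    then have "selection_value a r \<omega> = 0"
      if "r \<in> R" and "\<omega> \<in> set_pmf (joint_selection R K f)" for r \<omega>
      using selection_value_bounds[OF that a_bounds c_nonneg] that(1) by simp
    then have "(\<Sum>r\<in>R. selection_value a r \<omega>) = 0" if "\<omega> \<in> set_pmf (joint_selection R K f)" for \<omega>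
      using that by simp
    then have "measure_pmf.prob (joint_selection R K f) ?event = 0"
      using D t by (auto simp: measure_pmf_zero_iff)
    then show ?thesis
      by simp
  next
    case False
    then have "0 < S"
      by (simp add: S_def sum_nonneg order_le_neq_trans)
    have "measure_pmf.prob (joint_selection R K f) ?event \<le> exp (-2 * t\<^sup>2 / S)"
      unfolding S_def using a_bounds c_nonneg mean t \<open>0 < S\<close>[unfolded S_def]
      by (rule prob_selection_sum_ge)
    also have "\<dots> \<le> n powr (-4)"
    proof (rule exp_le_powr_neg4[OF n \<open>0 < S\<close>])
      show "2 * S * ln n \<le> t\<^sup>2"
        unfolding t_sq using S_le ln_n by (intro mult_right_mono) simp_all
    qed
    finally show ?thesis .
  qed
  moreover have "(1 + \<epsilon> * sqrt (2 * (\<Sum>r\<in>R. (c r / d r)\<^sup>2) * ln n)) * D = D + t"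
    unfolding t_def \<Delta>_def by (simp add: distrib_right)
  ultimately show ?thesis
    by simp
qed

end

theorem lemma23:
  fixes VS :: "'v set" and ES :: "('v \<times> 'v) set"
    and VT :: "'t \<Rightarrow> 'v set"
    and dS :: "'v \<times> 'v \<Rightarrow> real" and dSN :: "'t \<Rightarrow> 'v \<Rightarrow> real"
    and R :: "'r set"
    and Vr :: "'r \<Rightarrow> 'n set" and Er :: "'r \<Rightarrow> ('n \<times> 'n) set"
    and tau :: "'r \<Rightarrow> 'n \<Rightarrow> 't"
    and dV :: "'r \<Rightarrow> 'n \<Rightarrow> real" and dE :: "'r \<Rightarrow> 'n \<times> 'n \<Rightarrow> real"
    and Vallow :: "'r \<Rightarrow> 'n \<Rightarrow> 'v set"
    and Eallow :: "'r \<Rightarrow> 'n \<Rightarrow> 'n \<Rightarrow> ('v \<times> 'v) set"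
    and K :: "'r \<Rightarrow> 'k set" and f :: "'r \<Rightarrow> 'k \<Rightarrow> real"
    and m :: "'r \<Rightarrow> 'k \<Rightarrow> ('n, 'v) mapping"
    and u v :: 'v and \<epsilon> \<Delta> \<gamma> :: real
  assumes finite_VS: "finite VS"
    and ES_sub: "ES \<subseteq> VS \<times> VS"
    and VT_sub: "\<And>ty. VT ty \<subseteq> VS"
    and cap_edge_pos: "\<And>e. e \<in> ES \<Longrightarrow> dS e > 0"
    and cap_node_pos: "\<And>ty w. w \<in> VT ty \<Longrightarrow> dSN ty w > 0"
    and finite_R: "finite R"
    and finite_Vr: "\<And>r. r \<in> R \<Longrightarrow> finite (Vr r)"
    and Er_sub: "\<And>r. r \<in> R \<Longrightarrow> Er r \<subseteq> Vr r \<times> Vr r"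
    and dV_nonneg: "\<And>r i. r \<in> R \<Longrightarrow> dV r i \<ge> 0"
    and dE_nonneg: "\<And>r e. r \<in> R \<Longrightarrow> dE r e \<ge> 0"
    and Vallow_sub: "\<And>r i. r \<in> R \<Longrightarrow> i \<in> Vr r \<Longrightarrow> Vallow r i \<subseteq> VT (tau r i)"
    and Eallow_sub: "\<And>r i j. r \<in> R \<Longrightarrow> (i,j) \<in> Er r \<Longrightarrow> Eallow r i j \<subseteq> ES"
    and finite_K: "\<And>r. r \<in> R \<Longrightarrow> finite (K r)"
    and f_pos: "\<And>r k. r \<in> R \<Longrightarrow> k \<in> K r \<Longrightarrow> f r k > 0"
    and f_sum: "\<And>r. r \<in> R \<Longrightarrow> (\<Sum>k\<in>K r. f r k) \<le> 1"
    and m_valid: "\<And>r k. r \<in> R \<Longrightarrow> k \<in> K r \<Longrightarrow>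
                    valid_mapping ES (Vr r) (Er r) (Vallow r) (Eallow r) (m r k)"
    and feas_edge: "\<And>x y. (x,y) \<in> ES \<Longrightarrow>
          (\<Sum>r\<in>R. \<Sum>k\<in>K r. f r k * alloc_edge (Er r) (dE r) (m r k) x y) \<le> dS (x,y)"
    and feas_node: "\<And>ty w. w \<in> VT ty \<Longrightarrow>
          (\<Sum>r\<in>R. \<Sum>k\<in>K r. f r k * alloc_node (Vr r) (tau r) (dV r) (m r k) ty w) \<le> dSN ty w"
    and uv: "(u,v) \<in> ES"
    and eps_pos: "0 < \<epsilon>" and eps_le: "\<epsilon> \<le> 1"
    and eps_bound: "\<And>r. r \<in> R \<Longrightarrow> d_max (Er r) (dE r) (Eallow r) u v / dS (u,v) \<le> \<epsilon>"
    and Delta_def: "\<Delta> = (\<Sum>r\<in>R. (A_max ES (Vr r) (Er r) (Vallow r) (Eallow r) (dE r) u v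
                                  / d_max (Er r) (dE r) (Eallow r) u v) ^ 2)"
    and gamma_def: "\<gamma> = 1 + \<epsilon> * sqrt (2 * \<Delta> * ln (real (card VS)))"
  shows "measure_pmf.prob (joint_selection R K f)
           {\<omega>. (\<Sum>r\<in>R. case \<omega> r of None \<Rightarrow> 0
                          | Some k \<Rightarrow> alloc_edge (Er r) (dE r) (m r k) u v) \<ge> \<gamma> * dS (u,v)}
         \<le> real (card VS) powr (-4)"
proof -
  interpret fractional_selection R K f
    using finite_R finite_K f_pos f_sum by unfold_locales (auto intro: less_imp_le)
  have finite_Er: "finite (Er r)" if "r \<in> R" for r
    using finite_subset[OF Er_sub[OF that]] finite_Vr[OF that] by blast
  have dS: "0 < dS (u, v)"
    using cap_edge_pos[OF uv] .
  have "card VS \<noteq> 0"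
    using uv ES_sub finite_VS by auto
  then have n: "1 \<le> real (card VS)"
    by simp
  have "measure_pmf.prob (joint_selection R K f)
      {\<omega>. \<gamma> * dS (u, v) \<le> (\<Sum>r\<in>R. selection_value (\<lambda>r k. alloc_edge (Er r) (dE r) (m r k) u v) r \<omega>)}
    \<le> real (card VS) powr (-4)"
    unfolding gamma_def Delta_def
  proof (rule prob_selection_overload)
    show "alloc_edge (Er r) (dE r) (m r k) u v
        \<in> {0..A_max ES (Vr r) (Er r) (Vallow r) (Eallow r) (dE r) u v}" if "r \<in> R" "k \<in> K r" for r k
      using alloc_edge_nonneg[OF dE_nonneg] alloc_edge_le_A_max[OF finite_Er m_valid] that by simp
    show "d_max (Er r) (dE r) (Eallow r) u v \<le> \<epsilon> * dS (u, v)" if "r \<in> R" for r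
      using eps_bound[OF that] dS by (simp add: divide_le_eq)
  qed (use feas_edge[OF uv] dS eps_pos n in
      \<open>simp_all add: finite_Er A_max_nonneg d_max_nonneg A_max_eq_0_if_d_max_eq_0\<close>)
  then show ?thesis
    unfolding selection_value_def .
qed

end
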